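(* The operad $\mathrm{Prim}\,\mathcal Mag$ (and also the operad $\mathrm{Prim}\,\mathcal Mag_\omega$) cannot be generated by binary and ternary operations; i.e. $\mathrm{Prim}\,\mathcal Mag(4)$ (resp. $\mathrm{Prim}\,\mathcal Mag_\omega(4)$) is not contained in the span of the elements obtained from elements of arity $2$ and $3$ by iterated operadic composition (substitution) and the symmetric group actions.
   Context: $K$ is a field of characteristic $0$. A planar rooted tree is reduced if no vertex has exactly one incoming edge. $K\{x_1,\dots,x_n\}_\infty$ is the $K$-vector space with basis the empty tree $1$ and all planar reduced rooted trees with leaves labelled by $x_1,\dots,x_n$; for $k\ge2$, $\vee^k$ grafts $k$ nonempty trees (in order) onto a new root, extended multilinearly, with unit conventions (arguments $1$ omitted, $\vee^1=\mathrm{id}$, $\vee^k(1,\dots,1)=1$); it is the free unitary $\mathcal Mag_\omega$-algebra. $K\{x_1,\dots,x_n\}$ is its subspace spanned by $1$ and binary trees, the free unitary magma algebra with $a\cdot b=\vee^2(a,b)$. Tensor squares carry the operations componentwise, and the co-addition $\Delta_a$ is the unique unital homomorphism with $\Delta_a(x_i)=x_i\otimes1+1\otimes x_i$; $f$ is primitive if $\Delta_a(f)=f\otimes1+1\otimes f$. $\mathrm{Prim}\,\mathcal Mag(n)$ (resp. $\mathrm{Prim}\,\mathcal Mag_\omega(n)$) is the space of primitive multilinear elements of degree $n$ in $x_1,\dots,x_n$ of $K\{x_1,\dots,x_n\}$ (resp. $K\{x_1,\dots,x_n\}_\infty$); these form operads whose composition is substitution of primitive elements for the variables, with $\Sigma_n$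 acting by permuting variables. *)

theory Defs
  imports "HOL-Combinatorics.Permutations"
begin

text \<open>Nonempty planar rooted trees with leaves labelled by natural numbers
  (variable x_i is Leaf i).  The empty tree 1 is represented by None in
  the type tree option.\<close>
datatype tree = Leaf nat | Node "tree list"

fun is_reduced :: "tree \<Rightarrow> bool" where
  "is_reduced (Leaf i) = True"
| "is_reduced (Node ts) = (2 \<le> length ts \<and> (\<forall>t\<in>set ts. is_reduced t))"

fun is_binary :: "tree \<Rightarrow> bool" where
  "is_binary (Leaf i) = True"
| "is_binary (Node ts) = (length ts = 2 \<and> (\<forall>t\<in>set ts. is_binary t))"

fun leaves :: "tree \<Rightarrow> nat list" where
  "leaves (Leaf i) = [i]"
| "leaves (Node ts) = concat (map leaves ts)"

definition multilinear :: "nat \<Rightarrow> tree \<Rightarrow> bool" where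
  "multilinear n T \<longleftrightarrow> mset (leaves T) = mset [1..<n+1]"

text \<open>Grafting with the unit conventions: arguments equal to 1 are omitted,
  grafting one tree is the identity, grafting only units gives 1.\<close>
definition graft :: "tree option list \<Rightarrow> tree option" where
  "graft xs = (let ys = List.map_filter id xs in
     (case ys of [] \<Rightarrow> None | [t] \<Rightarrow> Some t | _ \<Rightarrow> Some (Node ys)))"

text \<open>Co-addition on a basis tree, as the (unital, Mag_omega-homomorphic)
  extension of x_i |-> x_i (x) 1 + 1 (x) x_i; the result is the list of basis
  tensors occurring (each with coefficient 1, repetitions counted).\<close>
fun delta :: "tree \<Rightarrow> (tree option \<times> tree option) list" where
  "delta (Leaf i) = [(Some (Leaf i), None), (None, Some (Leaf i))]"
| "delta (Node ts) = map (\<lambda>ps. (graft (map fst ps), graft (map snd ps)))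
                        (product_lists (map delta ts))"

text \<open>Elements of the free algebra without unit component: coefficient functions.\<close>
type_synonym 'a elem = "tree \<Rightarrow> 'a"

definition supp :: "'a::zero elem \<Rightarrow> tree set" where
  "supp f = {T. f T \<noteq> 0}"

definition coadd :: "'a::semiring_1 elem \<Rightarrow> (tree option \<times> tree option) \<Rightarrow> 'a" where
  "coadd f p = (\<Sum>T\<in>supp f. f T * of_nat (count_list (delta T) p))"

definition prim_rhs :: "'a::zero elem \<Rightarrow> (tree option \<times> tree option) \<Rightarrow> 'a" where
  "prim_rhs f p = (case p of (Some t, None) \<Rightarrow> f t | (None, Some t) \<Rightarrow> f t | _ \<Rightarrow> 0)"

definition primitive :: "'a::semiring_1 elem \<Rightarrow> bool" where
  "primitive f \<longleftrightarrow> (\<forall>p. coadd f p = prim_rhs f p)"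

definition PrimOmega :: "nat \<Rightarrow> 'a::semiring_1 elem set" where
  "PrimOmega n = {f. (\<forall>T\<in>supp f. is_reduced T \<and> multilinear n T) \<and> primitive f}"

definition PrimMag :: "nat \<Rightarrow> 'a::semiring_1 elem set" where
  "PrimMag n = {f. (\<forall>T\<in>supp f. is_binary T \<and> multilinear n T) \<and> primitive f}"

fun relabel :: "(nat \<Rightarrow> tree) \<Rightarrow> tree \<Rightarrow> tree" where
  "relabel s (Leaf i) = s i"
| "relabel s (Node ts) = Node (map (relabel s) ts)"

definition pcomp_tree :: "nat \<Rightarrow> nat \<Rightarrow> tree \<Rightarrow> tree \<Rightarrow> tree" where
  "pcomp_tree i k T1 T2 = relabel (\<lambda>j. if j < i then Leaf j
        else if j = i then relabel (\<lambda>l. Leaf (l + i - 1)) T2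
        else Leaf (j + k - 1)) T1"

definition pcomp :: "nat \<Rightarrow> nat \<Rightarrow> 'a::semiring_1 elem \<Rightarrow> 'a elem \<Rightarrow> 'a elem" where
  "pcomp i k f g T = (\<Sum>(T1,T2)\<in>{(T1,T2). T1 \<in> supp f \<and> T2 \<in> supp g \<and> pcomp_tree i k T1 T2 = T}.
                         f T1 * g T2)"

definition act :: "(nat \<Rightarrow> nat) \<Rightarrow> 'a elem \<Rightarrow> 'a elem" where
  "act \<sigma> f T = f (relabel (\<lambda>j. Leaf (\<sigma> j)) T)"

inductive_set gen :: "(nat \<Rightarrow> 'a::semiring_1 elem set) \<Rightarrow> (nat \<times> 'a elem) set"
  for P :: "nat \<Rightarrow> 'a elem set" where
  base: "n \<in> {2, 3} \<Longrightarrow> f \<in> P n \<Longrightarrow> (n, f) \<in> gen P"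
| comp: "(m, f) \<in> gen P \<Longrightarrow> (k, g) \<in> gen P \<Longrightarrow> 1 \<le> i \<Longrightarrow> i \<le> m
          \<Longrightarrow> (m + k - 1, pcomp i k f g) \<in> gen P"
| perm: "(n, f) \<in> gen P \<Longrightarrow> \<sigma> permutes {1..n} \<Longrightarrow> (n, act \<sigma> f) \<in> gen P"
| add: "(n, f) \<in> gen P \<Longrightarrow> (n, g) \<in> gen P \<Longrightarrow> (n, \<lambda>T. f T + g T) \<in> gen P"
| smult: "(n, f) \<in> gen P \<Longrightarrow> (n, \<lambda>T. c * f T) \<in> gen P"

end

theory Submission
  imports Defs
begin

text \<open>
  The functional shape_coeff balanced_shape sums the coefficients of all trees of shape
  (\<bullet>\<bullet>)(\<bullet>\<bullet>).  It is linear, invariant under relabelling the leaves, and vanishes on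
  every arity 4 element generated in arities 2 and 3: arity 2 primitives are multiples of the
  commutator x1x2 - x2x1, and an arity 4 composite is f \<circ>_i g with f or g of arity 2.
  If f is the commutator, every tree of the composite has a leaf directly below the root; if g is
  the commutator, substituting x1x2 and x2x1 for a leaf gives trees of equal shape with opposite
  coefficients.  On the other hand the binary element psi is primitive (checked by computing its
  co-addition) and has functional value 1.
\<close>

section \<open>Shapes of trees and the shape coefficients\<close>

lemma relabel_relabel: "relabel s (relabel s' T) = relabel (\<lambda>j. relabel s (s' j)) T"
  by (induction T) auto

lemma relabel_Leaf: "relabel Leaf T = T"
  by (induction T) (auto intro: map_idI)

lemma relabel_Leaf_inv:
  assumes "bij \<sigma>"
  shows "relabel (\<lambda>j. Leaf (\<sigma> j)) (relabel (\<lambda>j. Leaf (inv \<sigma> j)) T) = T"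
    and "relabel (\<lambda>j. Leaf (inv \<sigma> j)) (relabel (\<lambda>j. Leaf (\<sigma> j)) T) = T"
  using assms by (simp_all add: relabel_relabel relabel_Leaf bij_is_surj surj_f_inv_f bij_is_inj)

fun shape :: "tree \<Rightarrow> tree" where
  "shape (Leaf i) = Leaf 0"
| "shape (Node ts) = Node (map shape ts)"

definition balanced_shape :: tree where
  "balanced_shape = Node [Node [Leaf 0, Leaf 0], Node [Leaf 0, Leaf 0]]"

lemma shape_relabel_Leaf: "shape (relabel (\<lambda>j. Leaf (\<tau> j)) T) = shape T"
  by (induction T) auto

lemma shape_relabel_cong:
  "(\<And>j. shape (s j) = shape (s' j)) \<Longrightarrow> shape (relabel s T) = shape (relabel s' T)"
  by (induction T) auto

definition shape_coeff :: "tree \<Rightarrow> 'a::comm_monoid_add elem \<Rightarrow> 'a" where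
  "shape_coeff S h = (\<Sum>T\<in>{T\<in>supp h. shape T = S}. h T)"

lemma shape_coeff_eq_sum:
  assumes "finite A" "supp h \<subseteq> A"
  shows "shape_coeff S h = (\<Sum>T\<in>A. if shape T = S then h T else 0)"
proof -
  have "shape_coeff S h = (\<Sum>T\<in>{T\<in>A. shape T = S}. h T)"
    unfolding shape_coeff_def
    by (rule sum.mono_neutral_left) (use assms in \<open>auto simp: supp_def\<close>)
  then show ?thesis
    by (simp add: sum.inter_filter[OF assms(1)])
qed

lemma shape_coeff_add:
  assumes "finite (supp f)" "finite (supp g)"
  shows "shape_coeff S (\<lambda>T. f T + g T) = shape_coeff S f + shape_coeff S g"
proof -
  let ?A = "supp f \<union> supp g"
  have "supp (\<lambda>T. f T + g T) \<subseteq> ?A" by (auto simp: supp_def)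
  then show ?thesis
    using assms by (auto simp: shape_coeff_eq_sum[of ?A] sum.distrib[symmetric] intro!: sum.cong)
qed

lemma shape_coeff_smult:
  fixes f :: "'a::semiring_0 elem"
  assumes "finite (supp f)"
  shows "shape_coeff S (\<lambda>T. c * f T) = c * shape_coeff S f"
proof -
  have "supp (\<lambda>T. c * f T) \<subseteq> supp f" by (auto simp: supp_def)
  then show ?thesis
    using assms by (auto simp: shape_coeff_eq_sum[of "supp f"] sum_distrib_left intro!: sum.cong)
qed

lemma supp_act:
  assumes "bij \<sigma>"
  shows "supp (act \<sigma> f) = relabel (\<lambda>j. Leaf (inv \<sigma> j)) ` supp f"
  using relabel_Leaf_inv[OF assms]
  by (auto simp: supp_def act_def image_iff) (metis)

lemma shape_coeff_act:
  assumes "bij \<sigma>"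
  shows "shape_coeff S (act \<sigma> f) = shape_coeff S f"
proof -
  let ?R = "relabel (\<lambda>j. Leaf (inv \<sigma> j))" and ?X = "{T\<in>supp f. shape T = S}"
  have "inj ?R" by (metis injI relabel_Leaf_inv(1)[OF assms])
  then have inj: "inj_on ?R ?X" by (rule inj_on_subset) simp
  have "{T\<in>supp (act \<sigma> f). shape T = S} = ?R ` ?X"
    by (auto simp: supp_act[OF assms] shape_relabel_Leaf)
  then have "shape_coeff S (act \<sigma> f) = (\<Sum>T\<in>?X. act \<sigma> f (?R T))"
    by (simp add: shape_coeff_def sum.reindex[OF inj])
  also have "\<dots> = shape_coeff S f"
    by (simp add: shape_coeff_def act_def relabel_Leaf_inv(1)[OF assms])
  finally show ?thesis .
qed

lemma supp_pcomp:
  "supp (pcomp i k f g) \<subseteq> (\<lambda>(a, b). pcomp_tree i k a b) ` (supp f \<times> supp g)"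
proof
  fix T assume "T \<in> supp (pcomp i k f g)"
  then have "pcomp i k f g T \<noteq> 0" by (simp add: supp_def)
  then obtain x where "x \<in> {(a, b). a \<in> supp f \<and> b \<in> supp g \<and> pcomp_tree i k a b = T}"
    unfolding pcomp_def by (blast elim: sum.not_neutral_contains_not_neutral)
  then show "T \<in> (\<lambda>(a, b). pcomp_tree i k a b) ` (supp f \<times> supp g)" by force
qed

lemma finite_supp_pcomp:
  "finite (supp f) \<Longrightarrow> finite (supp g) \<Longrightarrow> finite (supp (pcomp i k f g))"
  by (rule finite_subset[OF supp_pcomp]) auto

lemma shape_coeff_pcomp:
  fixes f g :: "'a::comm_semiring_1 elem"
  assumes "finite (supp f)" "finite (supp g)"
  shows "shape_coeff S (pcomp i k f g)
       = (\<Sum>a\<in>supp f. \<Sum>b\<in>supp g. if shape (pcomp_tree i k a b) = S then f a * g b else 0)"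
proof -
  let ?A = "supp f \<times> supp g"
  let ?t = "\<lambda>x. pcomp_tree i k (fst x) (snd x)" and ?w = "\<lambda>x. f (fst x) * g (snd x)"
  let ?U = "?t ` ?A"
  have fin: "finite ?A" "finite ?U" using assms by auto
  have pcomp_eq: "pcomp i k f g T = (\<Sum>x\<in>?A. if ?t x = T then ?w x else 0)" for T
  proof -
    have "pcomp i k f g T = (\<Sum>x\<in>{x\<in>?A. ?t x = T}. ?w x)"
      unfolding pcomp_def by (rule sum.cong) auto
    then show ?thesis by (simp add: sum.inter_filter[OF fin(1)])
  qed
  have "shape_coeff S (pcomp i k f g) = (\<Sum>T\<in>?U. if shape T = S then pcomp i k f g T else 0)"
    by (rule shape_coeff_eq_sum[OF fin(2)]) (use supp_pcomp in \<open>force simp: case_prod_beta\<close>)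
  also have "\<dots> = (\<Sum>T\<in>?U. \<Sum>x\<in>?A. if ?t x = T then if shape T = S then ?w x else 0 else 0)"
  proof (intro sum.cong refl)
    fix T
    show "(if shape T = S then pcomp i k f g T else 0)
        = (\<Sum>x\<in>?A. if ?t x = T then if shape T = S then ?w x else 0 else 0)"
      by (cases "shape T = S") (simp_all add: pcomp_eq if_if_eq_conj)
  qed
  also have "\<dots> = (\<Sum>x\<in>?A. \<Sum>T\<in>?U. if ?t x = T then if shape T = S then ?w x else 0 else 0)"
    by (rule sum.swap)
  also have "\<dots> = (\<Sum>x\<in>?A. if shape (?t x) = S then ?w x else 0)"
    by (intro sum.cong refl) (simp add: fin(2) sum.delta')
  also have "\<dots> = (\<Sum>a\<in>supp f. \<Sum>b\<in>supp g. if shape (pcomp_tree i k a b) = S then f a * g b else 0)"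
    by (simp add: sum.cartesian_product case_prod_beta)
  finally show ?thesis .
qed

section \<open>Multiples of the commutator\<close>

definition x1x2 :: tree where "x1x2 = Node [Leaf 1, Leaf 2]"
definition x2x1 :: tree where "x2x1 = Node [Leaf 2, Leaf 1]"

lemma x1x2_neq_x2x1: "x1x2 \<noteq> x2x1"
  by (simp add: x1x2_def x2x1_def)

definition commutator_multiple :: "'a::ring_1 elem \<Rightarrow> bool" where
  "commutator_multiple f \<longleftrightarrow> supp f \<subseteq> {x1x2, x2x1} \<and> f x2x1 = - f x1x2"

lemma commutator_multiple_finite_supp:
  "commutator_multiple f \<Longrightarrow> finite (supp f)"
  unfolding commutator_multiple_def by (auto intro: finite_subset[of _ "{x1x2, x2x1}"])

lemma commutator_multiple_add:
  assumes "commutator_multiple f" "commutator_multiple g"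
  shows "commutator_multiple (\<lambda>T. f T + g T)"
  unfolding commutator_multiple_def
proof
  have "supp (\<lambda>T. f T + g T) \<subseteq> supp f \<union> supp g" by (auto simp: supp_def)
  also have "\<dots> \<subseteq> {x1x2, x2x1}" using assms by (simp add: commutator_multiple_def)
  finally show "supp (\<lambda>T. f T + g T) \<subseteq> {x1x2, x2x1}" .
  show "f x2x1 + g x2x1 = - (f x1x2 + g x1x2)"
    using assms by (simp add: commutator_multiple_def)
qed

lemma commutator_multiple_smult:
  fixes f :: "'a::comm_ring_1 elem"
  assumes "commutator_multiple f"
  shows "commutator_multiple (\<lambda>T. c * f T)"
  unfolding commutator_multiple_def
proof
  have "supp (\<lambda>T. c * f T) \<subseteq> supp f" by (auto simp: supp_def)
  also have "\<dots> \<subseteq> {x1x2, x2x1}" using assms by (simp add: commutator_multiple_def)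
  finally show "supp (\<lambda>T. c * f T) \<subseteq> {x1x2, x2x1}" .
  show "c * f x2x1 = - (c * f x1x2)"
    using assms by (simp add: commutator_multiple_def)
qed

lemma permutes_1_2_cases:
  assumes "\<sigma> permutes {1..2::nat}"
  shows "(\<sigma> 1 = 1 \<and> \<sigma> 2 = 2) \<or> (\<sigma> 1 = 2 \<and> \<sigma> 2 = 1)"
proof -
  have "{1..2::nat} = {1, 2}" by auto
  then have "\<sigma> 1 \<in> {1, 2}" "\<sigma> 2 \<in> {1, 2}"
    using permutes_in_image[OF assms] by simp_all
  moreover have "\<sigma> 1 \<noteq> \<sigma> 2"
    using permutes_inj[OF assms] by (simp add: inj_eq)
  ultimately show ?thesis by auto
qed

lemma commutator_multiple_act:
  assumes "commutator_multiple f" "\<sigma> permutes {1..2}"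
  shows "commutator_multiple (act \<sigma> f)"
proof -
  have "supp (act \<sigma> f) \<subseteq> relabel (\<lambda>j. Leaf (inv \<sigma> j)) ` {x1x2, x2x1}"
    using assms(1) by (auto simp: supp_act[OF permutes_bij[OF assms(2)]] commutator_multiple_def)
  also have "\<dots> \<subseteq> {x1x2, x2x1}"
    using permutes_1_2_cases[OF permutes_inv[OF assms(2)]] by (auto simp: x1x2_def x2x1_def)
  finally show ?thesis
    using assms(1) permutes_1_2_cases[OF assms(2)]
    by (auto simp: commutator_multiple_def act_def x1x2_def x2x1_def)
qed

lemma shape_coeff_pcomp_commutator_right:
  fixes f g :: "'a::comm_ring_1 elem"
  assumes "finite (supp f)" "commutator_multiple g"
  shows "shape_coeff S (pcomp i 2 f g) = 0"
proof -
  have supp_g: "supp g \<subseteq> {x1x2, x2x1}" and anti: "g x2x1 = - g x1x2"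
    using assms(2) by (auto simp: commutator_multiple_def)
  have same_shape: "shape (pcomp_tree i 2 a x1x2) = shape (pcomp_tree i 2 a x2x1)" for a
    unfolding pcomp_tree_def by (rule shape_relabel_cong) (simp add: x1x2_def x2x1_def)
  have "shape_coeff S (pcomp i 2 f g)
      = (\<Sum>a\<in>supp f. \<Sum>b\<in>{x1x2, x2x1}. if shape (pcomp_tree i 2 a b) = S then f a * g b else 0)"
    unfolding shape_coeff_pcomp[OF assms(1) commutator_multiple_finite_supp[OF assms(2)]]
    by (intro sum.cong refl sum.mono_neutral_left) (use supp_g in \<open>auto simp: supp_def\<close>)
  also have "\<dots> = 0"
  proof (rule sum.neutral, rule ballI)
    fix a
    show "(\<Sum>b\<in>{x1x2, x2x1}. if shape (pcomp_tree i 2 a b) = S then f a * g b else 0) = 0"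
      using same_shape[of a] anti
      by (cases "shape (pcomp_tree i 2 a x1x2) = S") (simp_all add: x1x2_neq_x2x1)
  qed
  finally show ?thesis .
qed

lemma shape_coeff_pcomp_commutator_left:
  fixes f g :: "'a::comm_ring_1 elem"
  assumes "commutator_multiple f" "finite (supp g)"
  shows "shape_coeff balanced_shape (pcomp i k f g) = 0"
proof -
  have "shape (pcomp_tree i k a b) \<noteq> balanced_shape" if "a \<in> {x1x2, x2x1}" for a b
    using that by (auto simp: pcomp_tree_def balanced_shape_def x1x2_def x2x1_def split: if_splits)
  then show ?thesis
    using assms commutator_multiple_finite_supp[OF assms(1)]
    by (auto simp: shape_coeff_pcomp commutator_multiple_def intro!: sum.neutral)
qed

section \<open>Primitive elements\<close>

lemma graft_map_Some: "2 \<le> length ts \<Longrightarrow> graft (map Some ts) = Some (Node ts)"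
  by (cases ts rule: remdups_adj.cases) (auto simp: graft_def List.map_filter_def)

lemma graft_map_None: "graft (map (\<lambda>_. None) ts) = None"
  by (simp add: graft_def List.map_filter_def comp_def)

lemma trivial_splittings_in_delta:
  assumes "is_reduced t"
  shows "(Some t, None) \<in> set (delta t) \<and> (None, Some t) \<in> set (delta t)"
  using assms
proof (induction t)
  case (Leaf i)
  then show ?case by simp
next
  case (Node ts)
  let ?split = "\<lambda>ps. (graft (map fst ps), graft (map snd ps))"
  let ?l = "map (\<lambda>t. (Some t, None)) ts" and ?r = "map (\<lambda>t. (None, Some t)) ts"
  have l: "?l \<in> set (product_lists (map delta ts))"
    and r: "?r \<in> set (product_lists (map delta ts))"
    using Node by (auto simp: product_lists_set list_all2_map1 list_all2_map2 list.rel_refl_strong)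
  have "(Some (Node ts), None) \<in> ?split ` set (product_lists (map delta ts))"
    by (rule rev_image_eqI[OF l])
      (use Node.prems in \<open>simp add: comp_def graft_map_Some graft_map_None\<close>)
  moreover have "(None, Some (Node ts)) \<in> ?split ` set (product_lists (map delta ts))"
    by (rule rev_image_eqI[OF r])
      (use Node.prems in \<open>simp add: comp_def graft_map_Some graft_map_None\<close>)
  ultimately show ?case
    by (simp only: delta.simps set_map)
qed

lemma coadd_eq_sum:
  assumes "finite A" "supp f \<subseteq> A"
  shows "coadd f p = (\<Sum>T\<in>A. f T * of_nat (count_list (delta T) p))"
  unfolding coadd_def
  by (rule sum.mono_neutral_left) (use assms in \<open>auto simp: supp_def\<close>)

lemma primitiveI:
  fixes f :: "'a::semiring_1 elem"
  assumes "finite A" "supp f \<subseteq> A" "\<forall>T\<in>A. is_reduced T"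
    and "\<forall>T\<in>A. \<forall>p\<in>set (delta T). coadd f p = prim_rhs f p"
  shows "primitive f"
  unfolding primitive_def
proof
  fix p
  show "coadd f p = prim_rhs f p"
  proof (cases "\<exists>T\<in>A. p \<in> set (delta T)")
    case True
    then show ?thesis using assms(4) by blast
  next
    case False
    then have "coadd f p = 0"
      by (simp add: coadd_eq_sum[OF assms(1,2)] count_list_0_iff)
    moreover have "prim_rhs f p = 0"
    proof -
      have vanish: "f t = 0" if "p = (Some t, None) \<or> p = (None, Some t)" for t
      proof (rule ccontr)
        assume "f t \<noteq> 0"
        then have "t \<in> A" using assms(2) by (auto simp: supp_def)
        then show False using False that trivial_splittings_in_delta[of t] assms(3) by blast
      qed
      then show ?thesis unfolding prim_rhs_def by (simp split: prod.split option.split)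
    qed
    ultimately show ?thesis by simp
  qed
qed

lemma primitive_finite_supp:
  assumes "primitive f"
  shows "finite (supp f)"
proof (rule ccontr)
  assume infinite: "infinite (supp f)"
  \<comment> \<open>then the sum defining coadd f is the junk value 0, which forces f = 0\<close>
  have "f t = 0" for t
  proof -
    have "f t = prim_rhs f (Some t, None)" by (simp add: prim_rhs_def)
    also have "\<dots> = coadd f (Some t, None)" using assms by (simp add: primitive_def)
    also have "\<dots> = 0" using infinite by (simp add: coadd_def)
    finally show ?thesis .
  qed
  then show False using infinite by (simp add: supp_def)
qed

lemma is_binary_imp_is_reduced: "is_binary t \<Longrightarrow> is_reduced t"
  by (induction t) auto

lemma PrimMag_subset_PrimOmega: "PrimMag n \<subseteq> PrimOmega n"
  by (auto simp: PrimMag_def PrimOmega_def is_binary_imp_is_reduced)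

lemma length_children_le_length_leaves:
  "(\<And>u. u \<in> set ts \<Longrightarrow> 1 \<le> length (leaves u))
    \<Longrightarrow> length ts \<le> length (leaves (Node ts))"
  using sum_list_mono[of ts "\<lambda>_. 1" "\<lambda>u. length (leaves u)"]
  by (simp add: sum_list_triv length_concat comp_def)

lemma length_leaves_reduced_ge_1: "is_reduced t \<Longrightarrow> 1 \<le> length (leaves t)"
proof (induction t)
  case (Node ts)
  then show ?case
    using length_children_le_length_leaves[of ts] by fastforce
qed simp

lemma reduced_one_leaf:
  assumes "is_reduced t" "length (leaves t) = 1"
  shows "\<exists>i. t = Leaf i"
proof (cases t)
  case (Node ts)
  then show ?thesis
    using assms length_children_le_length_leaves[of ts] length_leaves_reduced_ge_1 by fastforce
qed simp

lemma reduced_multilinear_2: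
  assumes "is_reduced T" "multilinear 2 T"
  shows "T = x1x2 \<or> T = x2x1"
proof -
  have leaves: "mset (leaves T) = {#1, 2#}"
    using assms(2) by (simp add: multilinear_def numeral_2_eq_2)
  then have two: "length (leaves T) = 2"
    by (metis size_mset size_add_mset size_empty numeral_2_eq_2 One_nat_def)
  then obtain ts where T: "T = Node ts"
    by (cases T) auto
  have "2 \<le> length ts" "length ts \<le> 2"
    using assms(1) two length_children_le_length_leaves[of ts] length_leaves_reduced_ge_1
    by (auto simp: T)
  then obtain a b where ts: "ts = [a, b]"
    by (metis le_antisym length_0_conv length_Suc_conv numeral_2_eq_2)
  have reduced: "is_reduced a" "is_reduced b"
    using assms(1) by (simp_all add: T ts)
  then have "length (leaves a) = 1" "length (leaves b) = 1"
    using two length_leaves_reduced_ge_1[of a] length_leaves_reduced_ge_1[of b] by (auto simp: T ts)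
  then obtain x y where "a = Leaf x" "b = Leaf y"
    using reduced reduced_one_leaf by metis
  with leaves have "T = Node [Leaf x, Leaf y]" "{#x, y#} = {#1, 2#}"
    by (simp_all add: T ts)
  then show ?thesis
    by (auto simp: x1x2_def x2x1_def add_eq_conv_ex)
qed

lemma PrimOmega_2_commutator_multiple:
  fixes f :: "'a::comm_ring_1 elem"
  assumes "f \<in> PrimOmega 2"
  shows "commutator_multiple f"
proof -
  have prim: "primitive f" and supp_f: "supp f \<subseteq> {x1x2, x2x1}"
    using assms reduced_multilinear_2 by (auto simp: PrimOmega_def)
  let ?p = "(Some (Leaf 1), Some (Leaf 2))"
  have "0 = coadd f ?p"
    using prim by (simp add: primitive_def prim_rhs_def)
  also have "\<dots> = (\<Sum>T\<in>{x1x2, x2x1}. f T * of_nat (count_list (delta T) ?p))"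
    by (rule coadd_eq_sum) (use supp_f in auto)
  also have "\<dots> = f x1x2 + f x2x1"
    by (simp add: x1x2_def x2x1_def graft_def List.map_filter_def)
  finally show ?thesis
    using supp_f by (simp add: commutator_multiple_def eq_neg_iff_add_eq_0 add.commute)
qed

section \<open>The suboperad generated in arities 2 and 3\<close>

lemma gen_arity_invariant:
  fixes P :: "nat \<Rightarrow> 'a::comm_ring_1 elem set"
  assumes "P 2 \<subseteq> PrimOmega 2" "P 3 \<subseteq> PrimOmega 3"
    and "(n, f) \<in> gen P"
  shows "2 \<le> n \<and> finite (supp f) \<and> (n = 2 \<longrightarrow> commutator_multiple f)
           \<and> (n = 4 \<longrightarrow> shape_coeff balanced_shape f = 0)"
  using assms(3)
proof (induction rule: gen.induct)
  case (base n f)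
  then have Prim: "f \<in> PrimOmega n" using assms(1,2) by auto
  then have "finite (supp f)"
    by (simp add: PrimOmega_def primitive_finite_supp)
  then show ?case
    using base.hyps Prim PrimOmega_2_commutator_multiple by auto
next
  case (comp m f k g i)
  have m: "2 \<le> m" "finite (supp f)" and k: "2 \<le> k" "finite (supp g)"
    using comp.IH by auto
  have "shape_coeff balanced_shape (pcomp i k f g) = 0" if "m + k - 1 = 4"
  proof -
    from that m k consider "m = 2" | "k = 2" by linarith
    then show ?thesis
    proof cases
      case 1
      then have "commutator_multiple f" using comp.IH by simp
      then show ?thesis using k(2) by (rule shape_coeff_pcomp_commutator_left)
    next
      case 2
      then have "commutator_multiple g" using comp.IH by simp
      then show ?thesis using shape_coeff_pcomp_commutator_right[OF m(2)] 2 by simp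
    qed
  qed
  moreover have "finite (supp (pcomp i k f g))"
    using m k by (simp add: finite_supp_pcomp)
  moreover have "2 < m + k - 1"
    using m k by linarith
  ultimately show ?case
    by simp
next
  case (perm n f \<sigma>)
  have bij: "bij \<sigma>" using perm.hyps(2) by (rule permutes_bij)
  have "finite (supp (act \<sigma> f))"
    using perm.IH by (simp add: supp_act[OF bij])
  moreover have "commutator_multiple (act \<sigma> f)" if "n = 2"
    using commutator_multiple_act[of f \<sigma>] perm.IH perm.hyps(2) that by simp
  ultimately show ?case
    using perm.IH by (simp add: shape_coeff_act[OF bij])
next
  case (add n f g)
  have "supp (\<lambda>T. f T + g T) \<subseteq> supp f \<union> supp g" by (auto simp: supp_def)
  then have "finite (supp (\<lambda>T. f T + g T))"
    by (rule finite_subset) (use add.IH in simp)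
  then show ?case
    using add.IH by (simp add: shape_coeff_add commutator_multiple_add)
next
  case (smult n f c)
  have "supp (\<lambda>T. c * f T) \<subseteq> supp f" by (auto simp: supp_def)
  then have "finite (supp (\<lambda>T. c * f T))"
    by (rule finite_subset) (use smult.IH in simp)
  then show ?case
    using smult.IH by (simp add: shape_coeff_smult commutator_multiple_smult)
qed

section \<open>A primitive element of arity 4 that is not generated\<close>

definition lincomb :: "('a::comm_monoid_add \<times> tree) list \<Rightarrow> 'a elem" where
  "lincomb xs T = (\<Sum>(c, U)\<leftarrow>xs. if U = T then c else 0)"

lemma lincomb_eq_0: "T \<notin> snd ` set xs \<Longrightarrow> lincomb xs T = 0"
  unfolding lincomb_def by (induction xs) auto

lemma supp_lincomb: "supp (lincomb xs) \<subseteq> snd ` set xs"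
  using lincomb_eq_0 by (auto simp: supp_def)

lemma supp_of_int: "supp (\<lambda>T. of_int (f T) :: 'a::ring_1) \<subseteq> supp f"
  by (auto simp: supp_def)

lemma primitive_of_int:
  assumes "primitive f"
  shows "primitive (\<lambda>T. of_int (f T) :: 'a::ring_1)"
proof -
  have fin: "finite (supp f)" using assms by (rule primitive_finite_supp)
  have "coadd (\<lambda>T. of_int (f T) :: 'a) p = of_int (coadd f p)" for p
    by (simp add: coadd_eq_sum[OF fin supp_of_int] coadd_eq_sum[OF fin order_refl])
  moreover have "prim_rhs (\<lambda>T. of_int (f T) :: 'a) p = of_int (prim_rhs f p)" for p
    by (simp add: prim_rhs_def split: prod.split option.split)
  ultimately show ?thesis
    using assms by (simp add: primitive_def)
qed

lemma shape_coeff_of_int: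
  assumes "finite (supp f)"
  shows "shape_coeff S (\<lambda>T. of_int (f T) :: 'a::ring_1) = of_int (shape_coeff S f)"
  by (simp add: shape_coeff_eq_sum[OF assms supp_of_int] shape_coeff_eq_sum[OF assms order_refl]
      of_int_sum if_distrib[of of_int] cong: if_cong)

definition psi_terms :: "(int \<times> tree) list" where
  "psi_terms =
     [( 1, Node [Node [Leaf 4, Leaf 1], Node [Leaf 2, Leaf 3]]),
      (-1, Node [Node [Node [Leaf 4, Leaf 1], Leaf 2], Leaf 3]),
      (-1, Node [Leaf 2, Node [Node [Leaf 1, Leaf 4], Leaf 3]]),
      ( 1, Node [Node [Leaf 1, Node [Leaf 4, Leaf 2]], Leaf 3]),
      (-1, Node [Leaf 1, Node [Leaf 4, Node [Leaf 2, Leaf 3]]]),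
      ( 1, Node [Leaf 2, Node [Leaf 1, Node [Leaf 4, Leaf 3]]])]"

definition psi :: "'a::ring_1 elem" where
  "psi T = of_int (lincomb psi_terms T)"

lemma finite_supp_psi_terms: "finite (supp (lincomb psi_terms))"
  by (rule finite_subset[OF supp_lincomb]) simp

lemma primitive_psi_terms: "primitive (lincomb psi_terms)"
proof (rule primitiveI[OF _ supp_lincomb])
  show "\<forall>T\<in>snd ` set psi_terms. is_reduced T"
    by code_simp
  show "\<forall>T\<in>snd ` set psi_terms. \<forall>p\<in>set (delta T).
          coadd (lincomb psi_terms) p = prim_rhs (lincomb psi_terms) p"
    unfolding coadd_eq_sum[OF _ supp_lincomb, OF finite_imageI[OF finite_set]]
    by code_simp
qed simp

lemma psi_in_PrimMag_4: "psi \<in> PrimMag 4"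
proof -
  have "\<forall>T\<in>snd ` set psi_terms. is_binary T \<and> multilinear 4 T"
    by code_simp
  then show ?thesis
    using supp_of_int[of "lincomb psi_terms"] supp_lincomb primitive_of_int[OF primitive_psi_terms]
    unfolding PrimMag_def psi_def by blast
qed

lemma shape_coeff_balanced_psi: "shape_coeff balanced_shape psi = 1"
proof -
  have "shape_coeff balanced_shape (lincomb psi_terms) = 1"
    unfolding shape_coeff_eq_sum[OF _ supp_lincomb, OF finite_imageI[OF finite_set]]
    by code_simp
  then show ?thesis
    unfolding psi_def by (simp add: shape_coeff_of_int[OF finite_supp_psi_terms])
qed

lemma psi_not_generated:
  fixes P :: "nat \<Rightarrow> 'a::comm_ring_1 elem set"
  assumes "P 2 \<subseteq> PrimOmega 2" "P 3 \<subseteq> PrimOmega 3"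
  shows "(4, psi) \<notin> gen P"
proof
  assume "(4, psi) \<in> gen P"
  then have "shape_coeff balanced_shape (psi :: 'a elem) = 0"
    using gen_arity_invariant[OF assms] by blast
  then show False
    by (simp add: shape_coeff_balanced_psi)
qed

theorem corollary4p5p8:
  shows "\<not> (PrimMag 4 \<subseteq> {f :: 'a::field_char_0 elem. (4, f) \<in> gen PrimMag})
       \<and> \<not> (PrimOmega 4 \<subseteq> {f :: 'a::field_char_0 elem. (4, f) \<in> gen PrimOmega})"
  using psi_not_generated[of PrimMag] psi_not_generated[of PrimOmega]
    psi_in_PrimMag_4 PrimMag_subset_PrimOmega
  by blast

end
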